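(* Let $M\ge 1$, let $1\le i\le M$, and consider a network $\mathbf{h}_0=\mathbf{x}$, $\mathbf{h}_k=f_k(\mathbf{h}_{k-1})$ for $k=1,\dots,M$, where each layer map has the form $f_k(\mathbf{h}_{k-1})=W_k\, s_k(\mathbf{h}_{k-1})$, with $W_k$ a weight matrix and $s_k$ an arbitrary differentiable, monotonically increasing function applied element-wise. Assume that each $f_k$ is invertible and that the feedback maps are its exact inverses, $g_k=f_k^{-1}$, $k=1,\dots,M$. Let $L(\mathbf{h}_M,\mathbf{y})$ be a differentiable loss for a training pair $(\mathbf{x},\mathbf{y})$. The back-propagation update of layer $i$ is $\delta W_i^{bp}=-\dfrac{\partial L(\mathbf{h}_M,\mathbf{y})}{\partial W_i}$, where $\mathbf{h}_M$ is regarded as a function of all weights through the forward pass. The target propagation update of layer $i$ is defined as follows: for a step size $\hat\eta>0$ set $\hat{\mathbf{h}}_M=\mathbf{h}_M-\hat\eta\,\dfrac{\partial L(\mathbf{h}_M,\mathbf{y})}{\partial \mathbf{h}_M}$, then recursively $\hat{\mathbf{h}}_{k}=g_{k+1}(\hat{\mathbf{h}}_{k+1})$ for $k=M-1,\dots,i$, and $\delta W_i^{tp}=-\dfrac{\partial \|W_i\, s_i(\mathbf{h}_{i-1})-\hat{\mathbf{h}}_i\|_2^2}{\partial W_i}$, where $\hat{\mathbf{h}}_i$ and $\mathbf{h}_{i-1}$ are treated as constants. Let $\alpha$ denote the angle between $\delta W_i^{tp}$ and $\delta W_i^{bp}$ (viewed as vectors). Let $J_{f_k}$ denote the Jacobian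 matrix of $f_k$ at $\mathbf{h}_{k-1}$, and let $\lambda_{\max}$ and $\lambda_{\min}$ be the largest and smallest singular values of $(J_{f_M}\cdots J_{f_{i+1}})^T$. Then there are functions $\Delta_1(\hat\eta)$, $\Delta_2(\hat\eta)$ that tend to $0$ as $\hat\eta\to 0$ such that, if $\hat\eta$ is sufficiently small, $$0<\frac{1+\Delta_1(\hat\eta)}{\frac{\lambda_{\max}}{\lambda_{\min}}+\Delta_2(\hat\eta)}\le \cos(\alpha)\le 1.$$
   Context: Biases are absorbed into the weight matrices $W_k$. "Target propagation" assigns to each hidden layer a target value propagated downward through the feedback maps $g_k$ and updates each layer's weights by a gradient step on the layer-local squared distance to its target, as described in the claim. When $i=M$ the product $J_{f_M}\cdots J_{f_{i+1}}$ is the empty product (the identity). *)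

theory Defs
  imports "HOL-Analysis.Analysis"
begin

definition layer :: "(nat \<Rightarrow> real^'n^'n) \<Rightarrow> (nat \<Rightarrow> real \<Rightarrow> real) \<Rightarrow> nat \<Rightarrow> real^'n \<Rightarrow> real^'n" where
  "layer W s k h = W k *v (\<chi> j. s k (h $ j))"

fun fwd :: "(nat \<Rightarrow> real^'n^'n) \<Rightarrow> (nat \<Rightarrow> real \<Rightarrow> real) \<Rightarrow> real^'n \<Rightarrow> nat \<Rightarrow> real^'n" where
  "fwd W s x 0 = x"
| "fwd W s x (Suc k) = layer W s (Suc k) (fwd W s x k)"

(* Target propagation downward: tp_back g M v j = g_{M-j+1}( ... g_M(v)), i.e. the target
  of layer M-j when the top target is v. *)
fun tp_back :: "(nat \<Rightarrow> real^'n \<Rightarrow> real^'n) \<Rightarrow> nat \<Rightarrow> real^'n \<Rightarrow> nat \<Rightarrow> real^'n" where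
  "tp_back g M v 0 = v"
| "tp_back g M v (Suc j) = g (M - j) (tp_back g M v j)"

definition grad :: "('a::real_inner \<Rightarrow> real) \<Rightarrow> 'a \<Rightarrow> 'a" where
  "grad f x = (THE g. (f has_derivative (\<lambda>d. g \<bullet> d)) (at x))"

definition jacobian :: "(real^'n \<Rightarrow> real^'m) \<Rightarrow> real^'n \<Rightarrow> real^'n^'m" where
  "jacobian f x = matrix (frechet_derivative f (at x))"

fun prodmat :: "(nat \<Rightarrow> real^'n^'n) \<Rightarrow> nat list \<Rightarrow> real^'n^'n" where
  "prodmat J [] = mat 1"
| "prodmat J (k # ks) = J k ** prodmat J ks"

definition singular_values :: "real^'n^'m \<Rightarrow> real set" where
  "singular_values A = {\<sigma>. \<sigma> \<ge> 0 \<and> (\<exists>v. v \<noteq> 0 \<and> (transpose A ** A) *v v = (\<sigma>^2) *\<^sub>R v)}"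

definition sv_max :: "real^'n^'m \<Rightarrow> real" where
  "sv_max A = Max (singular_values A)"

definition sv_min :: "real^'n^'m \<Rightarrow> real" where
  "sv_min A = Min (singular_values A)"

definition vangle :: "'a::real_inner \<Rightarrow> 'a \<Rightarrow> real" where
  "vangle u v = arccos ((u \<bullet> v) / (norm u * norm v))"

end

theory Submission
  imports Defs
begin

text \<open>Let \<open>P = J\<^sub>M \<cdots> J\<^bsub>i+1\<^esub>\<close> and \<open>a = s\<^sub>i(h\<^bsub>i-1\<^esub>)\<close>. By the chain rule the
  back-propagation gradient is the outer product of \<open>P\<^sup>T \<nabla>L\<close> and \<open>a\<close>. Since the feedback
  maps invert the layers, the inverse function theorem makes their composite differentiable at
  \<open>h\<^sub>M\<close> with derivative \<open>Q = P\<^sup>-\<^sup>1\<close>, so the target \<open>t\<^sub>i\<close> of layer \<open>i\<close> satisfies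
  \<open>(h\<^sub>i - t\<^sub>i) / \<eta> \<longrightarrow> Q \<nabla>L\<close>; the target-propagation update is the outer product of
  \<open>2 (h\<^sub>i - t\<^sub>i)\<close> and the same \<open>a\<close>. Hence \<open>cos \<alpha>\<close> tends to the cosine between \<open>w = Q \<nabla>L\<close> and
  \<open>P\<^sup>T \<nabla>L\<close>. As \<open>P w = \<nabla>L\<close>, their inner product is \<open>|\<nabla>L|\<^sup>2\<close>, while \<open>\<lambda>\<^sub>m\<^sub>i\<^sub>n |w| \<le> |\<nabla>L|\<close> and
  \<open>|P\<^sup>T \<nabla>L| \<le> \<lambda>\<^sub>m\<^sub>a\<^sub>x |\<nabla>L|\<close>; so the limit is at least \<open>\<lambda>\<^sub>m\<^sub>i\<^sub>n / \<lambda>\<^sub>m\<^sub>a\<^sub>x\<close>, and the claim holds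
  with \<open>\<Delta>\<^sub>2 = 0\<close>.\<close>

section \<open>Rayleigh quotients and singular values\<close>

lemma positive_semidefinite_null_form_imp_zero:
  fixes T :: "'a::real_inner \<Rightarrow> 'a"
  assumes lin: "linear T" and sym: "\<And>x y. x \<bullet> T y = T x \<bullet> y"
    and psd: "\<And>w. 0 \<le> w \<bullet> T w" and null: "z \<bullet> T z = 0"
  shows "T z = 0"
proof -
  define a where "a = T z \<bullet> T z"
  define c where "c = T z \<bullet> T (T z)"
  have quadratic: "0 \<le> 2 * t * a + t\<^sup>2 * c" for t
  proof -
    have "0 \<le> (z + t *\<^sub>R T z) \<bullet> T (z + t *\<^sub>R T z)" by (rule psd)
    also have "\<dots> = z \<bullet> T z + t * (z \<bullet> T (T z)) + t * (T z \<bullet> T z) + t\<^sup>2 * c"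
      by (simp add: linear_add[OF lin] linear_scale[OF lin]
          c_def power2_eq_square algebra_simps)
    finally show ?thesis using null sym[of z "T z"] by (simp add: a_def inner_commute)
  qed
  have "a = 0"
  proof (rule ccontr)
    assume "a \<noteq> 0"
    then have "a > 0" by (simp add: a_def)
    have "c \<ge> 0" by (simp add: c_def psd)
    define t where "t = - a / (c + 1)"
    have "t < 0" using \<open>a > 0\<close> \<open>c \<ge> 0\<close> by (simp add: t_def)
    moreover have "- a \<le> t * c" using \<open>a > 0\<close> \<open>c \<ge> 0\<close> by (simp add: t_def field_simps)
    ultimately have "t * (2 * a + t * c) < 0" using \<open>a > 0\<close> by (simp add: mult_neg_pos)
    then have "2 * t * a + t\<^sup>2 * c < 0" by (simp add: power2_eq_square algebra_simps)
    then show False using quadratic by (metis not_le)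
  qed
  then show ?thesis by (simp add: a_def)
qed

lemma self_adjoint_max_eigenvector:
  fixes S :: "'a::euclidean_space \<Rightarrow> 'a"
  assumes lin: "linear S" and sym: "\<And>x y. x \<bullet> S y = S x \<bullet> y"
  shows "\<exists>\<mu> v. v \<noteq> 0 \<and> S v = \<mu> *\<^sub>R v \<and> (\<forall>w. w \<bullet> S w \<le> \<mu> * (w \<bullet> w))"
proof -
  have "continuous_on (sphere 0 1) (\<lambda>w. w \<bullet> S w)"
    using lin by (intro continuous_intros linear_continuous_on) (simp add: linear_linear)
  then obtain z where z: "z \<in> sphere 0 1" and z_max: "\<And>w. w \<in> sphere 0 1 \<Longrightarrow> w \<bullet> S w \<le> z \<bullet> S z"
    using continuous_attains_sup[OF compact_sphere, of 0 1] by fastforce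
  define \<mu> where "\<mu> = z \<bullet> S z"
  have bound: "w \<bullet> S w \<le> \<mu> * (w \<bullet> w)" for w
  proof (cases "w = 0")
    case True
    then show ?thesis by (simp add: linear_0[OF lin])
  next
    case False
    have "(w /\<^sub>R norm w) \<bullet> S (w /\<^sub>R norm w) \<le> \<mu>"
      using False by (intro z_max[unfolded \<mu>_def[symmetric]]) simp
    moreover have "(w /\<^sub>R norm w) \<bullet> S (w /\<^sub>R norm w) = (w \<bullet> S w) / (w \<bullet> w)"
      by (simp add: linear_scale[OF lin] dot_square_norm power2_eq_square divide_inverse)
    ultimately show ?thesis
      using False by (simp add: divide_le_eq)
  qed
  define T where "T w = \<mu> *\<^sub>R w - S w" for w
  have "linear T"
    by (rule linearI) (simp_all add: T_def linear_add[OF lin] linear_scale[OF lin] algebra_simps)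
  moreover have "x \<bullet> T y = T x \<bullet> y" for x y
    by (simp add: T_def inner_diff_right inner_diff_left sym)
  moreover have "0 \<le> w \<bullet> T w" for w
    using bound[of w] by (simp add: T_def inner_diff_right)
  moreover have "z \<bullet> T z = 0"
    using z by (simp add: T_def inner_diff_right \<mu>_def dot_square_norm)
  ultimately have "T z = 0" by (rule positive_semidefinite_null_form_imp_zero)
  then show ?thesis
    using bound z by (intro exI[of _ \<mu>] exI[of _ z]) (auto simp: T_def)
qed

lemma symmetric_matrix_self_adjoint:
  fixes B :: "real^'n^'n"
  assumes "transpose B = B"
  shows "x \<bullet> (B *v y) = (B *v x) \<bullet> y"
  by (metis assms dot_lmul_matrix transpose_matrix_vector)

lemma inner_self_matrix_vector:
  fixes A :: "real^'n^'m"
  shows "(A *v w) \<bullet> (A *v w) = w \<bullet> ((transpose A ** A) *v w)"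
  by (metis dot_lmul_matrix inner_commute matrix_vector_mul_assoc transpose_matrix_vector)

lemma gram_max_eigenvector:
  fixes A :: "real^'n^'m"
  obtains \<mu> v where "v \<noteq> 0" "(transpose A ** A) *v v = \<mu> *\<^sub>R v" "0 \<le> \<mu>"
    "\<And>w. norm (A *v w) \<le> sqrt \<mu> * norm w"
proof -
  let ?B = "transpose A ** A"
  obtain \<mu> v where v: "v \<noteq> 0" "?B *v v = \<mu> *\<^sub>R v" and max: "\<And>w. w \<bullet> (?B *v w) \<le> \<mu> * (w \<bullet> w)"
    using self_adjoint_max_eigenvector[of "\<lambda>w. ?B *v w"]
      symmetric_matrix_self_adjoint[of ?B] by (auto simp: matrix_transpose_mul)
  have "0 \<le> \<mu> * (v \<bullet> v)"
    using v inner_self_matrix_vector[of A v] by (metis inner_ge_zero inner_scaleR_right)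
  then have "0 \<le> \<mu>" using v(1) by (metis inner_gt_zero_iff not_le zero_le_mult_iff)
  moreover have "norm (A *v w) \<le> sqrt \<mu> * norm w" for w
  proof (rule power2_le_imp_le)
    show "(norm (A *v w))\<^sup>2 \<le> (sqrt \<mu> * norm w)\<^sup>2"
      using max[of w] \<open>0 \<le> \<mu>\<close>
      by (simp add: power2_norm_eq_inner inner_self_matrix_vector power_mult_distrib)
  qed (use \<open>0 \<le> \<mu>\<close> in simp)
  ultimately show thesis using that v by blast
qed

lemma finite_singular_values:
  fixes A :: "real^'n^'m"
  shows "finite (singular_values A)"
proof -
  let ?B = "transpose A ** A"
  define E where "E = {\<mu>. \<exists>v. v \<noteq> 0 \<and> ?B *v v = \<mu> *\<^sub>R v}"
  define vec_of where "vec_of \<mu> = (SOME v. v \<noteq> 0 \<and> ?B *v v = \<mu> *\<^sub>R v)" for \<mu>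
  have vec_of: "vec_of \<mu> \<noteq> 0 \<and> ?B *v vec_of \<mu> = \<mu> *\<^sub>R vec_of \<mu>" if "\<mu> \<in> E" for \<mu>
    using that someI_ex[of "\<lambda>v. v \<noteq> 0 \<and> ?B *v v = \<mu> *\<^sub>R v"] by (simp add: E_def vec_of_def)
  have "inj_on vec_of E"
  proof (rule inj_onI)
    fix \<mu> \<nu> assume "\<mu> \<in> E" "\<nu> \<in> E" "vec_of \<mu> = vec_of \<nu>"
    then show "\<mu> = \<nu>" using vec_of by (metis scaleR_cancel_right)
  qed
  moreover have "pairwise orthogonal (vec_of ` E)"
  proof (clarsimp simp: pairwise_def)
    fix \<mu> \<nu> assume \<mu>: "\<mu> \<in> E" and \<nu>: "\<nu> \<in> E" and ne: "vec_of \<mu> \<noteq> vec_of \<nu>"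
    have "\<mu> * (vec_of \<mu> \<bullet> vec_of \<nu>) = vec_of \<mu> \<bullet> (?B *v vec_of \<nu>)"
      using vec_of[OF \<mu>] symmetric_matrix_self_adjoint[of ?B] by (simp add: matrix_transpose_mul)
    also have "\<dots> = \<nu> * (vec_of \<mu> \<bullet> vec_of \<nu>)" using vec_of[OF \<nu>] by simp
    finally show "orthogonal (vec_of \<mu>) (vec_of \<nu>)"
      using ne by (auto simp: orthogonal_def)
  qed
  moreover have "0 \<notin> vec_of ` E" using vec_of by auto
  ultimately have "finite E"
    using pairwise_orthogonal_independent independent_bound finite_imageD by blast
  moreover have "singular_values A \<subseteq> sqrt ` E"
    by (auto simp: singular_values_def E_def intro!: image_eqI[of _ sqrt])
  ultimately show ?thesis using finite_subset by blast
qed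

lemma singular_values_nonempty: "singular_values (A::real^'n^'m) \<noteq> {}"
proof -
  obtain \<mu> v where "v \<noteq> 0" "(transpose A ** A) *v v = \<mu> *\<^sub>R v" "0 \<le> \<mu>"
    using gram_max_eigenvector by blast
  then have "sqrt \<mu> \<in> singular_values A" by (auto simp: singular_values_def)
  then show ?thesis by blast
qed

lemma norm_matrix_vector_le_sv_max:
  fixes A :: "real^'n^'m"
  shows "norm (A *v w) \<le> sv_max A * norm w"
proof -
  obtain \<mu> v where v: "v \<noteq> 0" "(transpose A ** A) *v v = \<mu> *\<^sub>R v" "0 \<le> \<mu>"
    and bound: "norm (A *v w) \<le> sqrt \<mu> * norm w"
    using gram_max_eigenvector by blast
  then have "sqrt \<mu> \<in> singular_values A" by (auto simp: singular_values_def)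
  then have "sqrt \<mu> \<le> sv_max A" by (simp add: sv_max_def finite_singular_values)
  then show ?thesis using bound by (meson mult_right_mono norm_ge_zero order_trans)
qed

lemma sv_min_le_sv_max: "sv_min (A::real^'n^'m) \<le> sv_max A"
  unfolding sv_min_def sv_max_def
  using finite_singular_values singular_values_nonempty by (metis Max_ge Min_in)

lemma sv_min_pos_imp_eq_0:
  fixes A :: "real^'n^'m"
  assumes "sv_min A > 0" "A *v w = 0"
  shows "w = 0"
proof (rule ccontr)
  assume "w \<noteq> 0"
  then have "0 \<in> singular_values A"
    using assms(2) by (auto simp: singular_values_def intro!: exI[of _ w] simp flip: matrix_vector_mul_assoc)
  then have "sv_min A \<le> 0" unfolding sv_min_def using Min_le[OF finite_singular_values] by blast
  then show False using assms(1) by simp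
qed

text \<open>The least eigenvalue of \<open>A ** transpose A\<close> is a squared singular value of \<open>A\<close>:
  \<open>transpose A\<close> maps its eigenvectors to eigenvectors of \<open>transpose A ** A\<close>, and injectivity
  keeps them nonzero.\<close>

lemma sv_min_norm_le_norm_transpose:
  fixes A :: "real^'n^'m"
  assumes inj: "\<And>v. transpose A *v v = 0 \<Longrightarrow> v = 0"
  shows "sv_min A * norm w \<le> norm (transpose A *v w)"
proof -
  let ?C = "A ** transpose A"
  obtain \<nu> v where v: "v \<noteq> 0" "- (?C *v v) = \<nu> *\<^sub>R v"
    and max: "\<And>w. w \<bullet> - (?C *v w) \<le> \<nu> * (w \<bullet> w)"
    using self_adjoint_max_eigenvector[of "\<lambda>w. - (?C *v w)"]
      symmetric_matrix_self_adjoint[of ?C] by (auto simp: matrix_transpose_mul linear_compose_neg)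
  define \<mu> where "\<mu> = - \<nu>"
  have Cv: "?C *v v = \<mu> *\<^sub>R v" using v(2) by (simp add: \<mu>_def minus_equation_iff[of "?C *v v"])
  have norm_sq: "(transpose A *v w) \<bullet> (transpose A *v w) = w \<bullet> (?C *v w)" for w
    using inner_self_matrix_vector[of "transpose A" w] by simp
  have min: "\<mu> * (w \<bullet> w) \<le> w \<bullet> (?C *v w)" for w
    using max[of w] by (simp add: \<mu>_def)
  have "0 \<le> \<mu> * (v \<bullet> v)" using Cv norm_sq[of v] by (metis inner_ge_zero inner_scaleR_right)
  then have \<mu>_nonneg: "0 \<le> \<mu>" using v(1) by (metis inner_gt_zero_iff not_le zero_le_mult_iff)
  have "(transpose A ** A) *v (transpose A *v v) = transpose A *v (?C *v v)"
    by (metis matrix_vector_mul_assoc)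
  also have "\<dots> = \<mu> *\<^sub>R (transpose A *v v)" by (simp add: Cv matrix_vector_mult_scaleR)
  finally have "(transpose A ** A) *v (transpose A *v v) = \<mu> *\<^sub>R (transpose A *v v)" .
  moreover have "transpose A *v v \<noteq> 0" using inj v(1) by blast
  ultimately have "sqrt \<mu> \<in> singular_values A"
    using \<mu>_nonneg unfolding singular_values_def by auto
  then have "sv_min A \<le> sqrt \<mu>" unfolding sv_min_def using Min_le[OF finite_singular_values] by blast
  moreover have "sqrt \<mu> * norm w \<le> norm (transpose A *v w)"
  proof (rule power2_le_imp_le)
    have "(sqrt \<mu> * norm w)\<^sup>2 = \<mu> * (w \<bullet> w)"
      using \<mu>_nonneg by (simp add: power_mult_distrib power2_norm_eq_inner)
    also have "\<dots> \<le> (norm (transpose A *v w))\<^sup>2"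
      using min[of w] by (simp only: power2_norm_eq_inner norm_sq)
    finally show "(sqrt \<mu> * norm w)\<^sup>2 \<le> (norm (transpose A *v w))\<^sup>2" .
  qed simp
  ultimately show ?thesis by (meson mult_right_mono norm_ge_zero order_trans)
qed

lemma invertible_if_sv_min_transpose_pos:
  fixes A :: "real^'n^'n"
  assumes "sv_min (transpose A) > 0"
  shows "invertible A"
proof -
  obtain B where "B ** transpose A = mat 1"
    using sv_min_pos_imp_eq_0[OF assms] matrix_left_invertible_ker by blast
  then show ?thesis
    using invertible_left_inverse transpose_invertible[of "transpose A"] by auto
qed

section \<open>Angles and outer products\<close>

lemma cos_vangle: "cos (vangle u v) = (u \<bullet> v) / (norm u * norm v)"
proof -
  have "\<bar>(u \<bullet> v) / (norm u * norm v)\<bar> \<le> 1"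
    using Cauchy_Schwarz_ineq2[of u v]
    by (cases "norm u * norm v = 0") (auto simp: abs_div divide_le_eq_1)
  then show ?thesis unfolding vangle_def by (intro cos_arccos) (simp_all only: abs_le_iff, linarith+)
qed

lemma cos_vangle_uminus: "cos (vangle (- u) (- v)) = cos (vangle u v)"
  by (simp add: cos_vangle)

lemma cos_vangle_scaleR_left:
  "c > 0 \<Longrightarrow> cos (vangle (c *\<^sub>R u) v) = cos (vangle u v)"
  by (simp add: cos_vangle)

lemma tendsto_cos_vangle:
  assumes "(f \<longlongrightarrow> u) F" "u \<noteq> 0" "v \<noteq> 0"
  shows "((\<lambda>x. cos (vangle (f x) v)) \<longlongrightarrow> cos (vangle u v)) F"
  unfolding cos_vangle using assms by (intro tendsto_intros) auto

lemma sv_ratio_le_cos_vangle: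
  fixes P Q :: "real^'n^'n"
  assumes PQ: "P ** Q = mat 1" and "v \<noteq> 0" and pos: "sv_min (transpose P) > 0"
  shows "sv_min (transpose P) / sv_max (transpose P) \<le> cos (vangle (Q *v v) (transpose P *v v))"
proof -
  define u where "u = Q *v v"
  define b where "b = transpose P *v v"
  have Pu: "P *v u = v" by (simp add: u_def matrix_vector_mul_assoc PQ)
  have "Q ** P = mat 1" using PQ matrix_left_right_inverse by blast
  then have "P *v w = 0 \<Longrightarrow> w = 0" for w
    by (metis matrix_vector_mul_assoc matrix_vector_mul_lid matrix_vector_mult_0_right)
  then have lower: "sv_min (transpose P) * norm u \<le> norm v"
    using sv_min_norm_le_norm_transpose[of "transpose P" u] Pu
    by (simp add: flip: matrix_vector_mul_assoc)
  moreover have upper: "norm b \<le> sv_max (transpose P) * norm v"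
    unfolding b_def by (rule norm_matrix_vector_le_sv_max)
  ultimately have "sv_min (transpose P) * norm u * norm b \<le> norm v * (sv_max (transpose P) * norm v)"
    using pos by (intro mult_mono) auto
  then have "sv_min (transpose P) * (norm u * norm b) \<le> (norm v)\<^sup>2 * sv_max (transpose P)"
    by (simp add: power2_eq_square mult_ac)
  moreover have "u \<noteq> 0" using Pu \<open>v \<noteq> 0\<close> by auto
  moreover have "b \<noteq> 0" using sv_min_pos_imp_eq_0[OF pos] \<open>v \<noteq> 0\<close> by (auto simp: b_def)
  moreover have "u \<bullet> b = (norm v)\<^sup>2"
    by (metis Pu b_def dot_lmul_matrix inner_commute power2_norm_eq_inner transpose_matrix_vector)
  moreover have "sv_max (transpose P) > 0" using pos sv_min_le_sv_max[of "transpose P"] by linarith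
  ultimately show ?thesis
    using \<open>u \<noteq> 0\<close> \<open>b \<noteq> 0\<close> by (simp add: cos_vangle u_def b_def divide_le_eq le_divide_eq mult_ac)
qed

definition outer :: "real^'n \<Rightarrow> real^'m \<Rightarrow> real^'m^'n" where
  "outer u a = (\<chi> r c. u $ r * a $ c)"

lemma inner_outer: "outer u a \<bullet> D = u \<bullet> (D *v a)"
  by (simp add: outer_def inner_vec_def matrix_vector_mult_def sum_distrib_left mult_ac)

lemma inner_outer_outer: "outer u a \<bullet> outer v a = (u \<bullet> v) * (a \<bullet> a)"
  by (simp add: outer_def inner_vec_def sum_distrib_left sum_distrib_right mult_ac)

lemma norm_outer: "norm (outer u a) = norm u * norm a"
  by (simp add: norm_eq_sqrt_inner inner_outer_outer real_sqrt_mult)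

lemma outer_eq_0_iff: "outer u a = 0 \<longleftrightarrow> u = 0 \<or> a = 0"
  by (metis norm_eq_zero norm_outer mult_eq_0_iff)

lemma cos_vangle_outer:
  "a \<noteq> 0 \<Longrightarrow> cos (vangle (outer u a) (outer v a)) = cos (vangle u v)"
  by (simp add: cos_vangle inner_outer_outer norm_outer power2_norm_eq_inner[symmetric] power2_eq_square)

section \<open>Gradients and difference quotients\<close>

lemma grad_eqI:
  fixes f :: "'a::real_inner \<Rightarrow> real"
  assumes "(f has_derivative (\<lambda>d. v \<bullet> d)) (at x)"
  shows "grad f x = v"
  unfolding grad_def
proof (rule the_equality)
  fix w assume "(f has_derivative (\<lambda>d. w \<bullet> d)) (at x)"
  then have "(\<lambda>d. w \<bullet> d) = (\<lambda>d. v \<bullet> d)" using assms has_derivative_unique by blast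
  then have "(w - v) \<bullet> (w - v) = 0" by (metis inner_diff_left right_minus_eq)
  then show "w = v" by simp
qed (fact assms)

lemma has_derivative_grad:
  fixes f :: "'a::euclidean_space \<Rightarrow> real"
  assumes "f differentiable (at x)"
  shows "(f has_derivative (\<lambda>d. grad f x \<bullet> d)) (at x)"
proof -
  obtain f' where f': "(f has_derivative f') (at x)" using assms differentiable_def by blast
  define v where "v = (\<Sum>b\<in>Basis. f' b *\<^sub>R b)"
  have "f' d = v \<bullet> d" for d
  proof -
    have "f' d = f' (\<Sum>b\<in>Basis. (d \<bullet> b) *\<^sub>R b)" by (simp add: euclidean_representation)
    also have "\<dots> = (\<Sum>b\<in>Basis. f' b * (b \<bullet> d))"
      using has_derivative_linear[OF f'] by (simp add: linear_sum linear_scale inner_commute mult.commute)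
    also have "\<dots> = v \<bullet> d" by (simp add: v_def inner_sum_left)
    finally show ?thesis .
  qed
  then have "f' = (\<lambda>d. v \<bullet> d)" by (simp add: fun_eq_iff)
  with f' have "(f has_derivative (\<lambda>d. v \<bullet> d)) (at x)" by simp
  then show ?thesis using grad_eqI by metis
qed

lemma bounded_linear_matrix_vector_mult_left: "bounded_linear (\<lambda>V::real^'m^'n. V *v a)"
  unfolding linear_conv_bounded_linear[symmetric]
  by (rule linearI)
    (simp_all add: matrix_vector_mult_def vec_eq_iff sum_distrib_left distrib_left sum.distrib mult_ac)

lemma grad_norm_sq_matrix_vector:
  fixes a :: "real^'m" and t :: "real^'n"
  shows "grad (\<lambda>V. (norm (V *v a - t))\<^sup>2) V0 = outer (2 *\<^sub>R (V0 *v a - t)) a"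
proof (rule grad_eqI)
  have affine: "((\<lambda>V. V *v a - t) has_derivative (\<lambda>D. D *v a)) (at V0)"
    using has_derivative_diff[OF bounded_linear_imp_has_derivative has_derivative_const]
      bounded_linear_matrix_vector_mult_left by fastforce
  have "((\<lambda>V. (V *v a - t) \<bullet> (V *v a - t)) has_derivative
      (\<lambda>D. (V0 *v a - t) \<bullet> (D *v a) + (D *v a) \<bullet> (V0 *v a - t))) (at V0)"
    by (rule has_derivative_inner[OF affine affine])
  then show "((\<lambda>V. (norm (V *v a - t))\<^sup>2) has_derivative (\<lambda>D. outer (2 *\<^sub>R (V0 *v a - t)) a \<bullet> D)) (at V0)"
    unfolding power2_norm_eq_inner
    by (rule has_derivative_eq_rhs) (simp add: fun_eq_iff inner_outer, simp add: inner_commute)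
qed

lemma tendsto_difference_quotient_at_right:
  assumes "(\<psi> has_vector_derivative v) (at 0)"
  shows "((\<lambda>\<eta>. (1 / \<eta>) *\<^sub>R (\<psi> \<eta> - \<psi> 0)) \<longlongrightarrow> v) (at_right 0)"
proof -
  have "((\<lambda>\<eta>. (\<psi> \<eta> - \<psi> 0 - \<eta> *\<^sub>R v) /\<^sub>R norm \<eta>) \<longlongrightarrow> 0) (at_right 0)"
    using assms tendsto_mono[OF at_le[OF subset_UNIV]]
    by (auto simp: has_vector_derivative_def has_derivative_at_within)
  then have "((\<lambda>\<eta>. (1 / \<eta>) *\<^sub>R (\<psi> \<eta> - \<psi> 0) - v) \<longlongrightarrow> 0) (at_right 0)"
    by (rule Lim_transform_eventually)
      (use eventually_at_right_less[of "0::real"] in \<open>eventually_elim, simp add: scaleR_diff_right inverse_eq_divide\<close>)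
  then show ?thesis by (simp add: LIM_zero_iff)
qed

lemma tendsto_difference_quotient_along:
  fixes Q :: "real^'n^'m"
  assumes "(G has_derivative (\<lambda>v. Q *v v)) (at h)"
  shows "((\<lambda>\<eta>. (1 / \<eta>) *\<^sub>R (G h - G (h - \<eta> *\<^sub>R v))) \<longlongrightarrow> Q *v v) (at_right 0)"
proof -
  have "((\<lambda>\<eta>. h - \<eta> *\<^sub>R v) has_derivative (\<lambda>\<eta>. - (\<eta> *\<^sub>R v))) (at 0)"
    by (auto intro!: derivative_eq_intros)
  moreover have "(G has_derivative (\<lambda>v. Q *v v)) (at (h - 0 *\<^sub>R v))" using assms by simp
  ultimately have "((\<lambda>\<eta>. G (h - \<eta> *\<^sub>R v)) has_derivative (\<lambda>\<eta>. Q *v - (\<eta> *\<^sub>R v))) (at 0)"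
    by (rule has_derivative_compose)
  moreover have "Q *v - (\<eta> *\<^sub>R v) = \<eta> *\<^sub>R - (Q *v v)" for \<eta>
    using matrix_vector_mult_scaleR[of Q "- \<eta>" v] by simp
  ultimately have "((\<lambda>\<eta>. G (h - \<eta> *\<^sub>R v)) has_vector_derivative - (Q *v v)) (at 0)"
    by (simp add: has_vector_derivative_def)
  from tendsto_minus[OF tendsto_difference_quotient_at_right[OF this]] show ?thesis
    by (simp add: scaleR_diff_right)
qed

section \<open>Forward pass and back-propagation\<close>

lemma differentiable_vec_map:
  fixes s :: "real \<Rightarrow> real"
  assumes "\<And>t. s differentiable (at t)"
  shows "(\<lambda>h::real^'n. \<chi> j. s (h $ j)) differentiable (at h)"
proof (rule differentiable_componentwise_within[THEN iffD2], intro ballI)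
  fix b :: "real^'n" assume "b \<in> Basis"
  then obtain k where b: "b = axis k 1" by (auto simp: Basis_vec_def)
  have "(\<lambda>h::real^'n. h $ k) differentiable (at h)"
    by (rule bounded_linear_imp_differentiable[OF bounded_linear_vec_nth])
  then have "(s \<circ> (\<lambda>h. h $ k)) differentiable (at h)"
    using assms by (rule differentiable_chain_at)
  then show "(\<lambda>h. (\<chi> j. s (h $ j)) \<bullet> b) differentiable (at h)"
    by (simp add: b inner_axis o_def)
qed

lemma layer_differentiable:
  assumes "\<And>t. s k differentiable (at t)"
  shows "layer W s k differentiable (at h)"
  unfolding layer_def
  by (rule differentiable_compose[where f = "\<lambda>z. W k *v z", OF _ differentiable_vec_map])
    (simp_all add: assms bounded_linear_imp_differentiable)

lemma has_derivative_jacobian: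
  "f differentiable (at x) \<Longrightarrow> (f has_derivative (\<lambda>h. jacobian f x *v h)) (at x)"
  using jacobian_works[of f "at x"] unfolding Defs.jacobian_def Cartesian_Euclidean_Space.jacobian_def by simp

lemma has_derivative_layer:
  "(\<And>t. s k differentiable (at t)) \<Longrightarrow> (layer W s k has_derivative (\<lambda>v. jacobian (layer W s k) h *v v)) (at h)"
  by (intro has_derivative_jacobian layer_differentiable)

definition layer_jacobian ::
    "(nat \<Rightarrow> real^'n^'n) \<Rightarrow> (nat \<Rightarrow> real \<Rightarrow> real) \<Rightarrow> real^'n \<Rightarrow> nat \<Rightarrow> real^'n^'n" where
  "layer_jacobian W s x k = jacobian (layer W s k) (fwd W s x (k - 1))"

definition jacobian_chain ::
    "(nat \<Rightarrow> real^'n^'n) \<Rightarrow> (nat \<Rightarrow> real \<Rightarrow> real) \<Rightarrow> real^'n \<Rightarrow> nat \<Rightarrow> nat \<Rightarrow> real^'n^'n" where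
  "jacobian_chain W s x i k = prodmat (layer_jacobian W s x) (rev [i+1..<k+1])"

lemma prodmat_append: "prodmat J (xs @ ys) = prodmat J xs ** prodmat J ys"
  by (induction xs) (simp_all add: matrix_mul_assoc)

lemma invertible_prodmat_factor:
  assumes "invertible (prodmat J ks)" "k \<in> set ks"
  shows "invertible (J k)"
proof -
  have "det (prodmat J ks) = (\<Prod>k\<leftarrow>ks. det (J k))"
    by (induction ks) (simp_all add: det_mul)
  then show ?thesis using assms by (auto simp: invertible_det_nz prod_list_zero_iff)
qed

lemma jacobian_chain_self: "jacobian_chain W s x k k = mat 1"
  by (simp add: jacobian_chain_def)

lemma jacobian_chain_Suc:
  "i \<le> k \<Longrightarrow> jacobian_chain W s x i (Suc k) = layer_jacobian W s x (Suc k) ** jacobian_chain W s x i k"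
  by (simp add: jacobian_chain_def)

lemma jacobian_chain_pred:
  assumes "1 \<le> k" "k \<le> M"
  shows "jacobian_chain W s x (k - 1) M = jacobian_chain W s x k M ** layer_jacobian W s x k"
proof -
  have "[k..<M+1] = k # [k+1..<M+1]" using assms by (simp add: upt_conv_Cons)
  then show ?thesis using assms by (simp add: jacobian_chain_def prodmat_append)
qed

lemma fwd_eq_layer_input:
  "1 \<le> i \<Longrightarrow> fwd W s x i = W i *v (\<chi> j. s i (fwd W s x (i - 1) $ j))"
  by (cases i) (simp_all add: layer_def)

lemma fwd_fun_upd_below: "k < i \<Longrightarrow> fwd (W(i := V)) s x k = fwd W s x k"
  by (induction k) (simp_all add: layer_def)

lemma has_derivative_fwd_weight:
  assumes s_diff: "\<forall>k\<in>{1..M}. \<forall>t. s k differentiable (at t)" and "1 \<le> i"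
  shows "i \<le> k \<Longrightarrow> k \<le> M \<Longrightarrow> ((\<lambda>V. fwd (W(i := V)) s x k) has_derivative
      (\<lambda>D. jacobian_chain W s x i k *v (D *v (\<chi> j. s i (fwd W s x (i - 1) $ j))))) (at (W i))"
proof (induction k)
  case (Suc k)
  let ?a = "\<chi> j. s i (fwd W s x (i - 1) $ j)"
  show ?case
  proof (cases "Suc k = i")
    case True
    then have first: "(\<lambda>V. fwd (W(i := V)) s x (Suc k)) = (\<lambda>V. V *v ?a)"
      using fwd_fun_upd_below[of k i W _ s x] by (auto simp: layer_def)
    show ?thesis
      unfolding first using True bounded_linear_imp_has_derivative[OF bounded_linear_matrix_vector_mult_left]
      by (simp add: jacobian_chain_self)
  next
    case False
    then have k: "i \<le> k" "k < M" using Suc.prems by auto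
    have step: "(\<lambda>V. fwd (W(i := V)) s x (Suc k)) = (\<lambda>V. layer W s (Suc k) (fwd (W(i := V)) s x k))"
      using False by (auto simp: layer_def)
    have "(layer W s (Suc k) has_derivative (\<lambda>v. layer_jacobian W s x (Suc k) *v v))
        (at (fwd (W(i := W i)) s x k))"
      using s_diff k by (simp add: layer_jacobian_def has_derivative_layer)
    from has_derivative_compose[OF Suc.IH[OF k(1) less_imp_le[OF k(2)]] this]
    have "((\<lambda>V. layer W s (Suc k) (fwd (W(i := V)) s x k)) has_derivative
        (\<lambda>D. layer_jacobian W s x (Suc k) *v (jacobian_chain W s x i k *v (D *v ?a)))) (at (W i))" .
    then show ?thesis
      unfolding step using k by (simp add: jacobian_chain_Suc matrix_vector_mul_assoc matrix_mul_assoc)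
  qed
qed (use \<open>1 \<le> i\<close> in simp)

lemma grad_backprop:
  fixes loss :: "real^'n \<Rightarrow> real"
  assumes s_diff: "\<forall>k\<in>{1..M}. \<forall>t. s k differentiable (at t)" and i: "1 \<le> i" "i \<le> M"
    and loss_diff: "loss differentiable (at (fwd W s x M))"
  shows "grad (\<lambda>V. loss (fwd (W(i := V)) s x M)) (W i)
    = outer (transpose (jacobian_chain W s x i M) *v grad loss (fwd W s x M))
        (\<chi> j. s i (fwd W s x (i - 1) $ j))"
proof (rule grad_eqI)
  have "(loss has_derivative (\<lambda>d. grad loss (fwd W s x M) \<bullet> d)) (at (fwd (W(i := W i)) s x M))"
    using has_derivative_grad[OF loss_diff] by simp
  from has_derivative_compose[OF has_derivative_fwd_weight[OF s_diff i(1) i(2) order_refl] this]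
  show "((\<lambda>V. loss (fwd (W(i := V)) s x M)) has_derivative
      (\<lambda>D. outer (transpose (jacobian_chain W s x i M) *v grad loss (fwd W s x M))
        (\<chi> j. s i (fwd W s x (i - 1) $ j)) \<bullet> D))
      (at (W i))"
    by (rule has_derivative_eq_rhs) (simp add: fun_eq_iff inner_outer dot_lmul_matrix)
qed

section \<open>Target propagation\<close>

lemma tp_back_fwd:
  assumes g_inv: "\<forall>k\<in>{1..M}. \<forall>h. g k (layer W s k h) = h"
  shows "j \<le> M \<Longrightarrow> tp_back g M (fwd W s x M) j = fwd W s x (M - j)"
proof (induction j)
  case (Suc j)
  then have "fwd W s x (M - j) = layer W s (M - j) (fwd W s x (M - Suc j))"
    by (metis Suc_diff_Suc Suc_le_lessD fwd.simps(2))
  then show ?case using Suc g_inv by simp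
qed simp

lemma has_derivative_left_inverse_layer:
  assumes s_diff: "\<And>t. s k differentiable (at t)" and g_inv: "\<And>h. g (layer W s k h) = h"
    and "jacobian (layer W s k) h ** D' = mat 1"
  shows "(g has_derivative (\<lambda>v. D' *v v)) (at (layer W s k h))"
proof (rule has_derivative_inverse_strong[OF open_UNIV UNIV_I _ _ has_derivative_layer[of s k, OF s_diff]])
  show "continuous_on UNIV (layer W s k)"
    by (meson continuous_at_imp_continuous_on differentiable_imp_continuous_within
        layer_differentiable s_diff)
  show "(\<lambda>v. jacobian (layer W s k) h *v v) \<circ> (\<lambda>v. D' *v v) = id"
    using assms(3) by (simp add: fun_eq_iff matrix_vector_mul_assoc)
qed (use g_inv in simp)

lemma has_derivative_tp_back:
  assumes s_diff: "\<forall>k\<in>{1..M}. \<forall>t. s k differentiable (at t)"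
    and g_inv: "\<forall>k\<in>{1..M}. \<forall>h. g k (layer W s k h) = h"
    and inv: "\<forall>k\<in>{i+1..M}. invertible (layer_jacobian W s x k)"
  shows "j \<le> M - i \<Longrightarrow> \<exists>Q. ((\<lambda>v. tp_back g M v j) has_derivative (\<lambda>v. Q *v v)) (at (fwd W s x M))
      \<and> jacobian_chain W s x (M - j) M ** Q = mat 1"
proof (induction j)
  case 0
  show ?case by (intro exI[of _ "mat 1"]) (simp add: jacobian_chain_self)
next
  case (Suc j)
  define k where "k = M - j"
  have k: "i + 1 \<le> k" "k \<le> M" "1 \<le> k" using Suc.prems by (auto simp: k_def)
  obtain Q where Q: "((\<lambda>v. tp_back g M v j) has_derivative (\<lambda>v. Q *v v)) (at (fwd W s x M))"
    and chain_Q: "jacobian_chain W s x k M ** Q = mat 1"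
    using Suc by (auto simp: k_def)
  have "invertible (layer_jacobian W s x k)" using inv k by simp
  then obtain D' where D': "layer_jacobian W s x k ** D' = mat 1"
    unfolding invertible_def by blast
  have "fwd W s x k = layer W s k (fwd W s x (k - 1))"
    using k fwd.simps(2)[of W s x "k - 1"] by simp
  moreover have "tp_back g M (fwd W s x M) j = fwd W s x k"
    using tp_back_fwd[where j = j and x = x] g_inv Suc.prems by (simp add: k_def)
  ultimately have "(g k has_derivative (\<lambda>v. D' *v v)) (at (tp_back g M (fwd W s x M) j))"
    using has_derivative_left_inverse_layer[of s k "g k" W] s_diff g_inv k D'
    by (simp add: layer_jacobian_def)
  from has_derivative_compose[OF Q this]
  have "((\<lambda>v. tp_back g M v (Suc j)) has_derivative (\<lambda>v. (D' ** Q) *v v)) (at (fwd W s x M))"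
    by (simp add: k_def matrix_vector_mul_assoc)
  moreover have "jacobian_chain W s x (M - Suc j) M ** (D' ** Q)
      = jacobian_chain W s x k M ** ((layer_jacobian W s x k ** D') ** Q)"
    using jacobian_chain_pred[OF k(3,2), of W s x] by (simp add: k_def matrix_mul_assoc)
  ultimately show ?case using D' chain_Q by auto
qed

lemma tendsto_target_quotient:
  assumes i: "1 \<le> i" "i \<le> M"
    and s_diff: "\<forall>k\<in>{1..M}. \<forall>t. s k differentiable (at t)"
    and g_inv: "\<forall>k\<in>{1..M}. \<forall>h. g k (layer W s k h) = h"
    and sv_pos: "sv_min (transpose (jacobian_chain W s x i M)) > 0"
  obtains Q where "jacobian_chain W s x i M ** Q = mat 1"
    "\<And>v. ((\<lambda>\<eta>. (1 / \<eta>) *\<^sub>R (fwd W s x i - tp_back g M (fwd W s x M - \<eta> *\<^sub>R v) (M - i)))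
      \<longlongrightarrow> Q *v v) (at_right 0)"
proof -
  have "\<forall>k\<in>{i+1..M}. invertible (layer_jacobian W s x k)"
  proof
    fix k assume "k \<in> {i+1..M}"
    then have "k \<in> set (rev [i+1..<M+1])" by auto
    with invertible_if_sv_min_transpose_pos[OF sv_pos] show "invertible (layer_jacobian W s x k)"
      unfolding jacobian_chain_def by (rule invertible_prodmat_factor)
  qed
  then obtain Q where Q: "((\<lambda>v. tp_back g M v (M - i)) has_derivative (\<lambda>v. Q *v v)) (at (fwd W s x M))"
    and "jacobian_chain W s x i M ** Q = mat 1"
    using has_derivative_tp_back[OF s_diff g_inv, of i x "M - i"] i by auto
  moreover have "tp_back g M (fwd W s x M) (M - i) = fwd W s x i"
    using tp_back_fwd[OF g_inv, of "M - i" x] i by simp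
  ultimately show thesis
    using that tendsto_difference_quotient_along[OF Q] by simp
qed

lemma tendsto_cos_vangle_tp_bp:
  fixes W :: "nat \<Rightarrow> real^'n^'n" and loss :: "real^'n \<Rightarrow> real"
  assumes i: "1 \<le> i" "i \<le> M"
    and s_diff: "\<forall>k\<in>{1..M}. \<forall>t. s k differentiable (at t)"
    and g_inv: "\<forall>k\<in>{1..M}. \<forall>h. g k (layer W s k h) = h"
    and loss_diff: "loss differentiable (at (fwd W s x M))"
    and bp_nonzero: "grad (\<lambda>V. loss (fwd (W(i := V)) s x M)) (W i) \<noteq> 0"
    and sv_pos: "sv_min (transpose (jacobian_chain W s x i M)) > 0"
  shows "\<exists>c. sv_min (transpose (jacobian_chain W s x i M)) / sv_max (transpose (jacobian_chain W s x i M))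
      \<le> c \<and> ((\<lambda>\<eta>. cos (vangle
        (- grad (\<lambda>V. (norm (V *v (\<chi> j. s i (fwd W s x (i - 1) $ j))
            - tp_back g M (fwd W s x M - \<eta> *\<^sub>R grad loss (fwd W s x M)) (M - i)))\<^sup>2) (W i))
        (- grad (\<lambda>V. loss (fwd (W(i := V)) s x M)) (W i)))) \<longlongrightarrow> c) (at_right 0)"
proof -
  define a where "a = (\<chi> j. s i (fwd W s x (i - 1) $ j))"
  define P where "P = jacobian_chain W s x i M"
  define gL where "gL = grad loss (fwd W s x M)"
  define target where "target \<eta> = tp_back g M (fwd W s x M - \<eta> *\<^sub>R gL) (M - i)" for \<eta>
  have bp: "grad (\<lambda>V. loss (fwd (W(i := V)) s x M)) (W i) = outer (transpose P *v gL) a"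
    unfolding a_def P_def gL_def using grad_backprop[OF s_diff i loss_diff] .
  then have "transpose P *v gL \<noteq> 0" "a \<noteq> 0" using bp_nonzero by (auto simp: outer_eq_0_iff)
  then have "gL \<noteq> 0" by auto
  obtain Q where PQ: "P ** Q = mat 1" and target_lim: "\<And>v. ((\<lambda>\<eta>. (1 / \<eta>) *\<^sub>R
      (fwd W s x i - tp_back g M (fwd W s x M - \<eta> *\<^sub>R v) (M - i))) \<longlongrightarrow> Q *v v) (at_right 0)"
    using tendsto_target_quotient[OF i s_diff g_inv sv_pos] unfolding P_def by blast
  have quotient: "((\<lambda>\<eta>. (1 / \<eta>) *\<^sub>R (W i *v a - target \<eta>)) \<longlongrightarrow> Q *v gL) (at_right 0)"
    using target_lim[of gL] unfolding a_def target_def fwd_eq_layer_input[OF i(1), symmetric] .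
  have "Q *v gL \<noteq> 0"
    using PQ \<open>gL \<noteq> 0\<close> by (metis matrix_vector_mul_assoc matrix_vector_mul_lid matrix_vector_mult_0_right)
  have "\<forall>\<^sub>F \<eta> in at_right 0. cos (vangle ((1 / \<eta>) *\<^sub>R (W i *v a - target \<eta>)) (transpose P *v gL))
      = cos (vangle (- grad (\<lambda>V. (norm (V *v a - target \<eta>))\<^sup>2) (W i)) (- outer (transpose P *v gL) a))"
    using eventually_at_right_less[of "0::real"]
    by eventually_elim
      (use \<open>a \<noteq> 0\<close> in \<open>simp add: grad_norm_sq_matrix_vector cos_vangle_uminus cos_vangle_outer
        cos_vangle_scaleR_left\<close>)
  with tendsto_cos_vangle[OF quotient \<open>Q *v gL \<noteq> 0\<close> \<open>transpose P *v gL \<noteq> 0\<close>]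
  have "((\<lambda>\<eta>. cos (vangle (- grad (\<lambda>V. (norm (V *v a - target \<eta>))\<^sup>2) (W i)) (- outer (transpose P *v gL) a)))
      \<longlongrightarrow> cos (vangle (Q *v gL) (transpose P *v gL))) (at_right 0)"
    by (rule Lim_transform_eventually)
  moreover have "sv_min (transpose P) / sv_max (transpose P) \<le> cos (vangle (Q *v gL) (transpose P *v gL))"
    using sv_ratio_le_cos_vangle[OF PQ \<open>gL \<noteq> 0\<close>] sv_pos by (simp add: P_def)
  ultimately show ?thesis unfolding bp by (auto simp: a_def P_def gL_def target_def)
qed

lemma ratio_bound_if_tendsto:
  fixes C :: "'a \<Rightarrow> real"
  assumes lim: "(C \<longlongrightarrow> c) F" and "0 < a" "a \<le> b" "a / b \<le> c" and le_1: "\<And>\<eta>. C \<eta> \<le> 1"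
  shows "\<exists>\<Delta>1 \<Delta>2 :: 'a \<Rightarrow> real. (\<Delta>1 \<longlongrightarrow> 0) F \<and> (\<Delta>2 \<longlongrightarrow> 0) F \<and>
    (\<forall>\<^sub>F \<eta> in F. 0 < (1 + \<Delta>1 \<eta>) / (b / a + \<Delta>2 \<eta>)
      \<and> (1 + \<Delta>1 \<eta>) / (b / a + \<Delta>2 \<eta>) \<le> C \<eta> \<and> C \<eta> \<le> 1)"
proof (intro exI conjI)
  define \<Delta>1 where "\<Delta>1 \<eta> = min 0 (b / a * C \<eta> - 1)" for \<eta>
  have "1 \<le> b / a * c" using assms by (simp add: field_simps)
  moreover have "(\<Delta>1 \<longlongrightarrow> min 0 (b / a * c - 1)) F"
    unfolding \<Delta>1_def by (intro tendsto_intros lim)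
  ultimately show \<Delta>1_lim: "(\<Delta>1 \<longlongrightarrow> 0) F" by simp
  show "((\<lambda>_. 0) \<longlongrightarrow> 0) F" by simp
  have "\<forall>\<^sub>F \<eta> in F. - 1 < \<Delta>1 \<eta>" by (rule order_tendstoD(1)[OF \<Delta>1_lim]) simp
  then show "\<forall>\<^sub>F \<eta> in F. 0 < (1 + \<Delta>1 \<eta>) / (b / a + 0) \<and> (1 + \<Delta>1 \<eta>) / (b / a + 0) \<le> C \<eta>
      \<and> C \<eta> \<le> 1"
  proof eventually_elim
    case (elim \<eta>)
    have "0 < b / a" using assms by simp
    moreover have "1 + \<Delta>1 \<eta> \<le> C \<eta> * (b / a)" by (simp add: \<Delta>1_def mult.commute)
    moreover have "0 < 1 + \<Delta>1 \<eta>" using elim by simp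
    ultimately show ?case using le_1 by (simp only: add_0_right pos_divide_le_eq divide_pos_pos)
  qed
qed

theorem theorem1:
  fixes W :: "nat \<Rightarrow> real^'n^'n"
    and s :: "nat \<Rightarrow> real \<Rightarrow> real"
    and g :: "nat \<Rightarrow> real^'n \<Rightarrow> real^'n"
    and L :: "real^'n \<Rightarrow> 'y \<Rightarrow> real"
    and x :: "real^'n" and y :: 'y
    and M i :: nat
  assumes M: "M \<ge> 1" and i: "1 \<le> i" "i \<le> M"
    and s_diff: "\<forall>k\<in>{1..M}. \<forall>t. s k differentiable (at t)"
    and s_mono: "\<forall>k\<in>{1..M}. mono (s k)"
    and f_bij: "\<forall>k\<in>{1..M}. bij (layer W s k)"
    and g_inv: "\<forall>k\<in>{1..M}. \<forall>h. g k (layer W s k h) = h \<and> layer W s k (g k h) = h"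
    and L_diff: "\<forall>h. (\<lambda>h. L h y) differentiable (at h)"
    and bp_nonzero: "grad (\<lambda>V. L (fwd (W(i := V)) s x M) y) (W i) \<noteq> 0"
    and lmin_pos: "sv_min (transpose (prodmat (\<lambda>k. jacobian (layer W s k) (fwd W s x (k - 1)))
                                         (rev [i+1..<M+1]))) > 0"
  shows
   "let dWbp = - grad (\<lambda>V. L (fwd (W(i := V)) s x M) y) (W i);
        hM = fwd W s x M;
        gL = grad (\<lambda>h. L h y) hM;
        tgt = (\<lambda>\<eta>::real. tp_back g M (hM - \<eta> *\<^sub>R gL) (M - i));
        dWtp = (\<lambda>\<eta>. - grad (\<lambda>V. (norm (V *v (\<chi> j. s i (fwd W s x (i - 1) $ j)) - tgt \<eta>))\<^sup>2) (W i));
        P = prodmat (\<lambda>k. jacobian (layer W s k) (fwd W s x (k - 1))) (rev [i+1..<M+1]);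
        lmax = sv_max (transpose P);
        lmin = sv_min (transpose P)
    in \<exists>\<Delta>1 \<Delta>2 :: real \<Rightarrow> real.
         (\<Delta>1 \<longlongrightarrow> 0) (at_right 0) \<and> (\<Delta>2 \<longlongrightarrow> 0) (at_right 0) \<and>
         (\<forall>\<^sub>F \<eta> in at_right 0.
            0 < (1 + \<Delta>1 \<eta>) / (lmax / lmin + \<Delta>2 \<eta>) \<and>
            (1 + \<Delta>1 \<eta>) / (lmax / lmin + \<Delta>2 \<eta>) \<le> cos (vangle (dWtp \<eta>) dWbp) \<and>
            cos (vangle (dWtp \<eta>) dWbp) \<le> 1)"
proof -
  have chain_eq: "prodmat (\<lambda>k. jacobian (layer W s k) (fwd W s x (k - 1))) (rev [i+1..<M+1])
      = jacobian_chain W s x i M"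
    by (simp add: jacobian_chain_def layer_jacobian_def[abs_def])
  have sv_pos: "sv_min (transpose (jacobian_chain W s x i M)) > 0"
    using lmin_pos by (simp only: chain_eq)
  have g_left_inv: "\<forall>k\<in>{1..M}. \<forall>h. g k (layer W s k h) = h" using g_inv by blast
  show ?thesis
    using tendsto_cos_vangle_tp_bp[OF i s_diff g_left_inv L_diff[rule_format] bp_nonzero sv_pos]
    unfolding Let_def chain_eq
    by (elim exE conjE)
      (rule ratio_bound_if_tendsto[OF _ sv_pos sv_min_le_sv_max]; (assumption | rule cos_le_one))
qed

end
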